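(* Let $\kappa=\lambda^+$ with $\lambda$ a regular cardinal, and let $T$ be a tree of height $\kappa$ and size $\kappa$ which has at most $\kappa$ cofinal branches and in which every node has $\kappa$ many successors. Let $\langle b_\alpha:\alpha<\kappa\rangle$ be an enumeration of the cofinal branches of $T$, for each $\alpha<\kappa$ let $s_\alpha$ be the $\leq_T$-least element of $b_\alpha\setminus\bigcup_{\beta<\alpha}b_\beta$, and let $T^\star=\{t\in T:\neg\exists\alpha\,(s_\alpha<_T t\in b_\alpha)\}$. Assume there is a function $F:T^\star\to\lambda$ such that whenever $x\neq y$ are in $T^\star$ and $F(x)=F(y)$, then $x$ and $y$ are $\leq_T$-incomparable. Then there is $F':T\to\lambda$ with $F'\supseteq F$ such that $F'$ specializes $T$.
   Context: A function $F':T\to\lambda$ specializes $T$ (and $T$ is then called special) if for all $x,y,z\in T$, if $x\leq_T y$, $x\leq_T z$ and $F'(x)=F'(y)=F'(z)$, then $y\leq_T z$ or $z\leq_T y$. *)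

theory Defs
  imports Main
begin

unbundle cardinal_syntax

definition is_tree :: "'a set \<Rightarrow> 'a rel \<Rightarrow> bool" where
  "is_tree T le \<longleftrightarrow> le \<subseteq> T \<times> T \<and> (\<forall>t\<in>T. (t,t) \<in> le) \<and> antisym le \<and> trans le
     \<and> (\<forall>t\<in>T. Well_order (Restr le {s. (s,t) \<in> le}))"

definition tpred :: "'a rel \<Rightarrow> 'a \<Rightarrow> 'a set" where
  "tpred le t = {s. (s,t) \<in> le \<and> s \<noteq> t}"

definition ht :: "'a rel \<Rightarrow> 'a \<Rightarrow> 'a rel" where
  "ht le t = Restr le (tpred le t)"

definition has_height :: "'a set \<Rightarrow> 'a rel \<Rightarrow> 'k rel \<Rightarrow> bool" where
  "has_height T le kap \<longleftrightarrow> (\<forall>t\<in>T. ht le t <o kap)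
     \<and> (\<forall>r :: 'a rel. Well_order r \<and> r <o kap \<longrightarrow> (\<exists>t\<in>T. ht le t =o r))"

definition imm_succs :: "'a set \<Rightarrow> 'a rel \<Rightarrow> 'a \<Rightarrow> 'a set" where
  "imm_succs T le t = {s\<in>T. (t,s) \<in> le \<and> s \<noteq> t \<and>
      \<not> (\<exists>u\<in>T. u \<noteq> t \<and> u \<noteq> s \<and> (t,u) \<in> le \<and> (u,s) \<in> le)}"

definition cofinal_branch :: "'a set \<Rightarrow> 'a rel \<Rightarrow> 'k rel \<Rightarrow> 'a set \<Rightarrow> bool" where
  "cofinal_branch T le kap b \<longleftrightarrow> b \<subseteq> T
     \<and> (\<forall>x\<in>b. \<forall>y\<in>b. (x,y) \<in> le \<or> (y,x) \<in> le)
     \<and> (\<forall>y\<in>b. \<forall>x\<in>T. (x,y) \<in> le \<longrightarrow> x \<in> b)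
     \<and> (\<forall>r :: 'a rel. Well_order r \<and> r <o kap \<longrightarrow> (\<exists>t\<in>b. ht le t =o r))"

definition is_least :: "'a rel \<Rightarrow> 'a set \<Rightarrow> 'a \<Rightarrow> bool" where
  "is_least le D s \<longleftrightarrow> s \<in> D \<and> (\<forall>x\<in>D. (s,x) \<in> le)"

definition Tstar :: "'a set \<Rightarrow> 'a rel \<Rightarrow> 'k rel \<Rightarrow> ('k \<Rightarrow> 'a set) \<Rightarrow> 'a set" where
  "Tstar T le kap bs = {t\<in>T. \<not> (\<exists>\<alpha>\<in>Field kap. \<exists>s.
      is_least le (bs \<alpha> - (\<Union>\<beta>\<in>{\<beta>. (\<beta>,\<alpha>) \<in> kap \<and> \<beta> \<noteq> \<alpha>}. bs \<beta>)) s
      \<and> (s,t) \<in> le \<and> s \<noteq> t \<and> t \<in> bs \<alpha>)}"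

definition specializes :: "'a set \<Rightarrow> 'a rel \<Rightarrow> ('a \<Rightarrow> 'l) \<Rightarrow> bool" where
  "specializes T le F \<longleftrightarrow> (\<forall>x\<in>T. \<forall>y\<in>T. \<forall>z\<in>T.
     (x,y) \<in> le \<and> (x,z) \<in> le \<and> F x = F y \<and> F x = F z \<longrightarrow> (y,z) \<in> le \<or> (z,y) \<in> le)"

end

theory Submission
  imports Defs
begin

text \<open>Every node t outside T* lies on a branch b_\<alpha> strictly above s_\<alpha>, and s_\<alpha> itself is in T*;
  retracting t to s_\<alpha> (and T* to itself) gives a map r onto T* with r t \<le> t whose fibres
  are chains, because the sets b_\<alpha> minus the earlier branches are pairwise disjoint, so s_\<alpha>
  determines \<alpha>.  Then F' = F \<circ> r specializes T: if x \<le> y, z with equal colours, then r x and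
  r y are predecessors of y, hence comparable, hence equal as F is injective on chains of T*;
  likewise r x = r z, so y and z lie in one fibre.\<close>

lemma is_treeD:
  assumes "is_tree T le"
  shows tree_le_in_T: "(x,y) \<in> le \<Longrightarrow> x \<in> T \<and> y \<in> T"
    and tree_refl: "t \<in> T \<Longrightarrow> (t,t) \<in> le"
    and tree_antisym: "(x,y) \<in> le \<Longrightarrow> (y,x) \<in> le \<Longrightarrow> x = y"
    and tree_trans: "(x,y) \<in> le \<Longrightarrow> (y,z) \<in> le \<Longrightarrow> (x,z) \<in> le"
  using assms unfolding is_tree_def antisym_def trans_def by blast+

lemma tree_predecessors_comparable:
  assumes tree: "is_tree T le" and "(a,y) \<in> le" "(b,y) \<in> le"
  shows "(a,b) \<in> le \<or> (b,a) \<in> le"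
proof -
  let ?W = "Restr le {s. (s,y) \<in> le}"
  have "a \<in> T" "b \<in> T" "y \<in> T" using tree_le_in_T[OF tree] assms(2,3) by blast+
  then have "Well_order ?W" and "(a,a) \<in> ?W" "(b,b) \<in> ?W"
    using tree tree_refl[OF tree] assms(2,3) unfolding is_tree_def by auto
  then have "a \<noteq> b \<Longrightarrow> (a,b) \<in> ?W \<or> (b,a) \<in> ?W"
    unfolding well_order_on_def linear_order_on_def total_on_def Field_def by blast
  then show ?thesis using tree_refl[OF tree \<open>a \<in> T\<close>] by blast
qed

lemma specializes_comp_retraction:
  assumes tree: "is_tree T le"
    and retract: "\<forall>t\<in>T. r t \<in> S \<and> (r t, t) \<in> le"
    and fibres: "\<forall>y\<in>T. \<forall>z\<in>T. r y = r z \<longrightarrow> (y,z) \<in> le \<or> (z,y) \<in> le"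
    and F_spec: "\<forall>x\<in>S. \<forall>y\<in>S. x \<noteq> y \<and> F x = F y \<longrightarrow> (x,y) \<notin> le \<and> (y,x) \<notin> le"
  shows "specializes T le (\<lambda>t. F (r t))"
  unfolding specializes_def
proof (intro ballI impI)
  fix x y z assume "x \<in> T" "y \<in> T" "z \<in> T"
    and h: "(x,y) \<in> le \<and> (x,z) \<in> le \<and> F (r x) = F (r y) \<and> F (r x) = F (r z)"
  have "r x = r w" if "w \<in> T" "(x,w) \<in> le" "F (r x) = F (r w)" for w
  proof -
    have "(r x, w) \<in> le"
      using tree_trans[OF tree] retract \<open>x \<in> T\<close> that(2) by blast
    then have "(r x, r w) \<in> le \<or> (r w, r x) \<in> le"
      using tree_predecessors_comparable[OF tree] retract that(1) by blast
    then show ?thesis using F_spec retract \<open>x \<in> T\<close> that by blast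
  qed
  then have "r y = r z" using h \<open>y \<in> T\<close> \<open>z \<in> T\<close> by metis
  then show "(y,z) \<in> le \<or> (z,y) \<in> le" using fibres \<open>y \<in> T\<close> \<open>z \<in> T\<close> by blast
qed

definition fresh_part :: "'k rel \<Rightarrow> ('k \<Rightarrow> 'a set) \<Rightarrow> 'k \<Rightarrow> 'a set" where
  "fresh_part kap bs \<alpha> = bs \<alpha> - (\<Union>\<beta>\<in>{\<beta>. (\<beta>,\<alpha>) \<in> kap \<and> \<beta> \<noteq> \<alpha>}. bs \<beta>)"

lemma Tstar_fresh_part:
  "Tstar T le kap bs = {t\<in>T. \<not> (\<exists>\<alpha>\<in>Field kap. \<exists>s.
      is_least le (fresh_part kap bs \<alpha>) s \<and> (s,t) \<in> le \<and> s \<noteq> t \<and> t \<in> bs \<alpha>)}"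
  unfolding Tstar_def fresh_part_def ..

lemma fresh_part_index_unique:
  assumes "total_on (Field kap) kap" "\<alpha> \<in> Field kap" "\<beta> \<in> Field kap"
    and "x \<in> fresh_part kap bs \<alpha>" "x \<in> bs \<beta>" "y \<in> fresh_part kap bs \<beta>" "y \<in> bs \<alpha>"
  shows "\<alpha> = \<beta>"
proof (rule ccontr)
  assume "\<alpha> \<noteq> \<beta>"
  then consider "(\<beta>,\<alpha>) \<in> kap" | "(\<alpha>,\<beta>) \<in> kap" using assms(1-3) unfolding total_on_def by blast
  then show False using assms(4-7) \<open>\<alpha> \<noteq> \<beta>\<close> unfolding fresh_part_def by cases blast+
qed

lemma cofinal_branchD:
  assumes "cofinal_branch T le kap b"
  shows cofinal_branch_subset: "b \<subseteq> T"
    and cofinal_branch_chain: "x \<in> b \<Longrightarrow> y \<in> b \<Longrightarrow> (x,y) \<in> le \<or> (y,x) \<in> le"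
    and cofinal_branch_down_closed: "y \<in> b \<Longrightarrow> x \<in> T \<Longrightarrow> (x,y) \<in> le \<Longrightarrow> x \<in> b"
  using assms unfolding cofinal_branch_def by blast+

definition star_retract :: "'a set \<Rightarrow> 'a rel \<Rightarrow> 'k rel \<Rightarrow> ('k \<Rightarrow> 'a set) \<Rightarrow> 'a \<Rightarrow> 'a" where
  "star_retract T le kap bs t = (if t \<in> Tstar T le kap bs then t
     else SOME s. \<exists>\<alpha>\<in>Field kap. is_least le (fresh_part kap bs \<alpha>) s \<and> (s,t) \<in> le \<and> s \<noteq> t \<and> t \<in> bs \<alpha>)"

context
  fixes T :: "'a set" and le :: "'a rel" and kap :: "'k rel" and bs :: "'k \<Rightarrow> 'a set"
  assumes tree: "is_tree T le"
    and kap_total: "total_on (Field kap) kap"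
    and branches: "\<forall>\<alpha>\<in>Field kap. cofinal_branch T le kap (bs \<alpha>)"
begin

lemma fresh_least_in_Tstar:
  assumes \<alpha>: "\<alpha> \<in> Field kap" and s: "is_least le (fresh_part kap bs \<alpha>) s"
  shows "s \<in> Tstar T le kap bs"
proof -
  have s_fresh: "s \<in> fresh_part kap bs \<alpha>" and "s \<in> bs \<alpha>"
    using s unfolding is_least_def fresh_part_def by auto
  then have "s \<in> T" using cofinal_branch_subset[OF branches[rule_format, OF \<alpha>]] by blast
  moreover have False
    if \<beta>: "\<beta> \<in> Field kap" and s': "is_least le (fresh_part kap bs \<beta>) s'"
      and above: "(s',s) \<in> le" "s' \<noteq> s" "s \<in> bs \<beta>" for \<beta> s'
  proof -
    have s'_fresh: "s' \<in> fresh_part kap bs \<beta>" using s' unfolding is_least_def by blast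
    have "s' \<in> T" using tree_le_in_T[OF tree above(1)] by blast
    then have "s' \<in> bs \<alpha>"
      using cofinal_branch_down_closed[OF branches[rule_format, OF \<alpha>] \<open>s \<in> bs \<alpha>\<close>] above(1)
      by blast
    then have "\<alpha> = \<beta>"
      using fresh_part_index_unique[OF kap_total \<alpha> \<beta> s_fresh] above s'_fresh by blast
    then have "(s,s') \<in> le" using s s'_fresh unfolding is_least_def by blast
    then show False using tree_antisym[OF tree] above by blast
  qed
  ultimately show ?thesis unfolding Tstar_fresh_part by blast
qed

lemma star_retract_cases:
  assumes "t \<in> T"
  obtains (in_Tstar) "t \<in> Tstar T le kap bs" "star_retract T le kap bs t = t"
  | (above_root) \<alpha> where "\<alpha> \<in> Field kap"
      "is_least le (fresh_part kap bs \<alpha>) (star_retract T le kap bs t)"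
      "(star_retract T le kap bs t, t) \<in> le" "t \<in> bs \<alpha>"
proof (cases "t \<in> Tstar T le kap bs")
  case True
  then show ?thesis using in_Tstar unfolding star_retract_def by simp
next
  case False
  then have "\<exists>s. \<exists>\<alpha>\<in>Field kap. is_least le (fresh_part kap bs \<alpha>) s \<and> (s,t) \<in> le \<and> s \<noteq> t \<and> t \<in> bs \<alpha>"
    using \<open>t \<in> T\<close> unfolding Tstar_fresh_part by blast
  from someI_ex[OF this] show ?thesis
    using above_root False unfolding star_retract_def by auto
qed

lemma star_retract_below:
  assumes "t \<in> T"
  shows "star_retract T le kap bs t \<in> Tstar T le kap bs \<and> (star_retract T le kap bs t, t) \<in> le"
  using assms
proof (cases rule: star_retract_cases)
  case in_Tstar
  then show ?thesis using tree_refl[OF tree assms] by simp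
next
  case (above_root \<alpha>)
  then show ?thesis using fresh_least_in_Tstar by blast
qed

lemma star_retract_fibres_chains:
  assumes "y \<in> T" "z \<in> T" and same: "star_retract T le kap bs y = star_retract T le kap bs z"
  shows "(y,z) \<in> le \<or> (z,y) \<in> le"
  using \<open>y \<in> T\<close>
proof (cases rule: star_retract_cases)
  case in_Tstar
  then show ?thesis using same star_retract_below[OF \<open>z \<in> T\<close>] by simp
next
  case y_above: (above_root \<alpha>)
  show ?thesis using \<open>z \<in> T\<close>
  proof (cases rule: star_retract_cases)
    case in_Tstar
    then show ?thesis using same star_retract_below[OF \<open>y \<in> T\<close>] by simp
  next
    case z_above: (above_root \<beta>)
    let ?s = "star_retract T le kap bs y"
    have fresh: "?s \<in> fresh_part kap bs \<alpha>" "?s \<in> fresh_part kap bs \<beta>"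
      using y_above(2) z_above(2) same unfolding is_least_def by auto
    then have "?s \<in> bs \<alpha>" "?s \<in> bs \<beta>" unfolding fresh_part_def by auto
    then have "\<alpha> = \<beta>"
      using fresh_part_index_unique[OF kap_total y_above(1) z_above(1) fresh(1) _ fresh(2)] by blast
    then show ?thesis
      using cofinal_branch_chain[OF branches[rule_format, OF y_above(1)]] y_above(4) z_above(4)
      by blast
  qed
qed

end

theorem lemma4p3:
  fixes lam :: "'l rel" and kap :: "'k rel" and T :: "'a set" and le :: "'a rel"
    and bs :: "'k \<Rightarrow> 'a set" and F :: "'a \<Rightarrow> 'l"
  assumes lam_card: "Card_order lam" and lam_inf: "\<not> finite (Field lam)"
    and lam_reg: "regularCard lam"
    and kap_card: "Card_order kap" and kap_suc: "(kap, cardSuc lam) \<in> ordIso"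
    and tree: "is_tree T le"
    and height: "has_height T le kap"
    and size: "(card_of T, kap) \<in> ordIso"
    and few_branches: "(card_of {b. cofinal_branch T le kap b}, kap) \<in> ordLeq"
    and succs: "\<forall>t\<in>T. (card_of (imm_succs T le t), kap) \<in> ordIso"
    and enum: "bs ` Field kap = {b. cofinal_branch T le kap b}"
    and F_range: "\<forall>t\<in>Tstar T le kap bs. F t \<in> Field lam"
    and F_spec: "\<forall>x\<in>Tstar T le kap bs. \<forall>y\<in>Tstar T le kap bs.
                   x \<noteq> y \<and> F x = F y \<longrightarrow> (x,y) \<notin> le \<and> (y,x) \<notin> le"
  shows "\<exists>F' :: 'a \<Rightarrow> 'l. (\<forall>t\<in>T. F' t \<in> Field lam)
           \<and> (\<forall>t\<in>Tstar T le kap bs. F' t = F t)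
           \<and> specializes T le F'"
proof -
  have kap_total: "total_on (Field kap) kap"
    using card_order_on_well_order_on[OF kap_card]
    unfolding well_order_on_def linear_order_on_def by blast
  have branches: "\<forall>\<alpha>\<in>Field kap. cofinal_branch T le kap (bs \<alpha>)" using enum by blast
  let ?r = "star_retract T le kap bs"
  have retract: "\<forall>t\<in>T. ?r t \<in> Tstar T le kap bs \<and> (?r t, t) \<in> le"
    using star_retract_below[OF tree kap_total branches] by blast
  have "\<forall>t\<in>T. F (?r t) \<in> Field lam" using retract F_range by blast
  moreover have "\<forall>t\<in>Tstar T le kap bs. F (?r t) = F t" unfolding star_retract_def by simp
  moreover have "specializes T le (\<lambda>t. F (?r t))"
    using specializes_comp_retraction[OF tree retract _ F_spec]
      star_retract_fibres_chains[OF tree kap_total branches] by blast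
  ultimately show ?thesis by (intro exI[of _ "\<lambda>t. F (?r t)"]) simp
qed

end
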